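(* Let $\mathbf{A}=(a_{ij})$ be a table with nonnegative entries, let $(R_1,\dots,R_k)$ be a proper partition of its row set and $(C_1,\dots,C_k)$ a proper partition of its column set, and set $s_{ab}=\sum_{i\in R_a}\sum_{j\in C_b}a_{ij}$ for $1\le a,b\le k$. Suppose the $k\times k$ matrix $(s_{ab})$ is an independent table, i.e. $s_{ab}=\big(\sum_{b'=1}^k s_{ab'}\big)\big(\sum_{a'=1}^k s_{a'b}\big)$ for all $a,b$. Then ${\mathrm{disc}}_\ell(\mathbf{A})\le{\mathrm{disc}}_1(\mathbf{A})$ for every $\ell=2,\dots,k$.
   Context: Standing assumptions: $\mathbf{A}$ is an $m\times n$ array of nonnegative entries whose total sum is $1$, and $\mathbf{A}$ is non-decomposable ($\mathbf{A}\mathbf{A}^T$ if $m\le n$, or $\mathbf{A}^T\mathbf{A}$ if $m>n$, is irreducible); in particular all row sums $d_{row,i}=\sum_j a_{ij}$ and column sums $d_{col,j}=\sum_i a_{ij}$ are positive. Let $R$ be the row set and $C$ the column set. For $X\subset R$, $Y\subset C$: ${\mathrm{Vol}}(X)=\sum_{i\in X}d_{row,i}$, ${\mathrm{Vol}}(Y)=\sum_{j\in Y}d_{col,j}$, $a(X,Y)=\sum_{i\in X}\sum_{j\in Y}a_{ij}$, and for nonempty $X,Y$, $\rho(X,Y)=\frac{a(X,Y)}{{\mathrm{Vol}}(X){\mathrm{Vol}}(Y)}$. For a proper $k$-partition $R_1,\dots,R_k$ of $R$ and $C_1,\dots,C_k$ of $C$ (all parts nonempty), and nonempty $X\subset R_a$,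 $Y\subset C_b$, ${\mathrm{disc}}(X,Y;R_a,C_b)=|\rho(X,Y)-\rho(R_a,C_b)|\sqrt{{\mathrm{Vol}}(X){\mathrm{Vol}}(Y)}$; ${\mathrm{disc}}(\mathbf{A};R_1,\dots,R_k,C_1,\dots,C_k)=\max_{1\le a,b\le k}\max_{X\subset R_a,\,Y\subset C_b}{\mathrm{disc}}(X,Y;R_a,C_b)$; and ${\mathrm{disc}}_k(\mathbf{A})$ is the minimum of this quantity over all proper $k$-partitions of the rows and of the columns. (For $k=1$ the partition is $R$, $C$ themselves.) *)

theory Defs
  imports Complex_Main
begin

text \<open>An m x n table is a function A :: nat => nat => real, rows indexed by
  {..<m}, columns by {..<n}.\<close>

definition row_vol :: "(nat \<Rightarrow> nat \<Rightarrow> real) \<Rightarrow> nat \<Rightarrow> nat set \<Rightarrow> real" where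
  "row_vol A n X = (\<Sum>i\<in>X. \<Sum>j<n. A i j)"

definition col_vol :: "(nat \<Rightarrow> nat \<Rightarrow> real) \<Rightarrow> nat \<Rightarrow> nat set \<Rightarrow> real" where
  "col_vol A m Y = (\<Sum>j\<in>Y. \<Sum>i<m. A i j)"

definition amass :: "(nat \<Rightarrow> nat \<Rightarrow> real) \<Rightarrow> nat set \<Rightarrow> nat set \<Rightarrow> real" where
  "amass A X Y = (\<Sum>i\<in>X. \<Sum>j\<in>Y. A i j)"

definition rho :: "(nat \<Rightarrow> nat \<Rightarrow> real) \<Rightarrow> nat \<Rightarrow> nat \<Rightarrow> nat set \<Rightarrow> nat set \<Rightarrow> real" where
  "rho A m n X Y = amass A X Y / (row_vol A n X * col_vol A m Y)"

definition disc_sets ::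
  "(nat \<Rightarrow> nat \<Rightarrow> real) \<Rightarrow> nat \<Rightarrow> nat \<Rightarrow> nat set \<Rightarrow> nat set \<Rightarrow> nat set \<Rightarrow> nat set \<Rightarrow> real" where
  "disc_sets A m n X Y Ra Cb =
     \<bar>rho A m n X Y - rho A m n Ra Cb\<bar> * sqrt (row_vol A n X * col_vol A m Y)"

definition proper_partition :: "nat \<Rightarrow> nat \<Rightarrow> (nat \<Rightarrow> nat set) \<Rightarrow> bool" where
  "proper_partition N k P \<longleftrightarrow>
     (\<forall>a<k. P a \<noteq> {}) \<and> (\<forall>a<k. \<forall>b<k. a \<noteq> b \<longrightarrow> P a \<inter> P b = {}) \<and>
     (\<Union>a<k. P a) = {..<N}"

definition disc_part ::
  "(nat \<Rightarrow> nat \<Rightarrow> real) \<Rightarrow> nat \<Rightarrow> nat \<Rightarrow> nat \<Rightarrow> (nat \<Rightarrow> nat set) \<Rightarrow> (nat \<Rightarrow> nat set) \<Rightarrow> real" where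
  "disc_part A m n k R C =
     Max {disc_sets A m n X Y (R a) (C b) | a b X Y.
            a < k \<and> b < k \<and> X \<subseteq> R a \<and> X \<noteq> {} \<and> Y \<subseteq> C b \<and> Y \<noteq> {}}"

definition disc_k :: "(nat \<Rightarrow> nat \<Rightarrow> real) \<Rightarrow> nat \<Rightarrow> nat \<Rightarrow> nat \<Rightarrow> real" where
  "disc_k A m n k =
     Inf {disc_part A m n k R C | R C. proper_partition m k R \<and> proper_partition n k C}"

definition irreducible_mat :: "nat \<Rightarrow> (nat \<Rightarrow> nat \<Rightarrow> real) \<Rightarrow> bool" where
  "irreducible_mat N M \<longleftrightarrow>
     (\<forall>i<N. \<forall>j<N. (i, j) \<in> {(p, q). p < N \<and> q < N \<and> M p q > 0}\<^sup>*)"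

definition non_decomposable :: "(nat \<Rightarrow> nat \<Rightarrow> real) \<Rightarrow> nat \<Rightarrow> nat \<Rightarrow> bool" where
  "non_decomposable A m n =
     (if m \<le> n then irreducible_mat m (\<lambda>i i'. \<Sum>j<n. A i j * A i' j)
      else irreducible_mat n (\<lambda>j j'. \<Sum>i<m. A i j * A i j'))"

end

theory Submission
  imports Defs
begin

text \<open>Merge the parts of the given k-partitions along c \<mapsto> min c (l - 1) into l parts.
  Independence of the aggregated k x k table makes amass multiplicative on unions of blocks, so
  every merged block has density rho = 1, which is also the density of the whole table. Since a
  partition enters disc_sets only through this reference density, every value maximised in
  disc_part for the merged partitions also occurs for the trivial 1-partition.\<close>

lemma proper_partition_subset:
  assumes "proper_partition N k P" "a < k"
  shows "P a \<subseteq> {..<N}"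
  using assms unfolding proper_partition_def by blast

lemma proper_partition_finite:
  assumes "proper_partition N k P" "a < k"
  shows "finite (P a)"
  using finite_subset[OF proper_partition_subset[OF assms]] by simp

lemma proper_partition_nonempty: "proper_partition N k P \<Longrightarrow> a < k \<Longrightarrow> P a \<noteq> {}"
  unfolding proper_partition_def by blast

lemma proper_partition_pos:
  assumes "proper_partition N k P" "0 < k"
  shows "0 < N"
proof -
  obtain x where "x \<in> P 0"
    using proper_partition_nonempty[OF assms] by blast
  then have "x < N"
    using proper_partition_subset[OF assms] by blast
  then show ?thesis by simp
qed

lemma proper_partition_UN: "proper_partition N k P \<Longrightarrow> (\<Union>a<k. P a) = {..<N}"
  unfolding proper_partition_def by blast

lemma proper_partition_disjoint:
  "proper_partition N k P \<Longrightarrow> a < k \<Longrightarrow> b < k \<Longrightarrow> a \<noteq> b \<Longrightarrow> P a \<inter> P b = {}"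
  unfolding proper_partition_def by blast

lemma proper_partition_UN_subset:
  assumes "proper_partition N k P" "I \<subseteq> {..<k}"
  shows "(\<Union>a\<in>I. P a) \<subseteq> {..<N}"
proof (rule UN_least)
  fix a assume "a \<in> I"
  with assms(2) have "a < k" by auto
  then show "P a \<subseteq> {..<N}" by (rule proper_partition_subset[OF assms(1)])
qed

lemma proper_partition_UN_nonempty:
  assumes "proper_partition N k P" "I \<subseteq> {..<k}" "I \<noteq> {}"
  shows "(\<Union>a\<in>I. P a) \<noteq> {}"
proof -
  obtain a where a: "a \<in> I" using assms(3) by blast
  with assms(2) have "a < k" by auto
  then obtain x where "x \<in> P a" using proper_partition_nonempty[OF assms(1)] by blast
  then show ?thesis using a by blast
qed

lemma UN_lessThan_one: "(\<Union>a<(1::nat). P a) = P 0"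
  by (simp add: lessThan_Suc)

lemma proper_partition_one_part: "proper_partition N 1 P \<Longrightarrow> P 0 = {..<N}"
  using proper_partition_UN[of N 1 P] unfolding UN_lessThan_one .

lemma proper_partition_one_trivial: "0 < N \<Longrightarrow> proper_partition N 1 (\<lambda>_. {..<N})"
  unfolding proper_partition_def UN_lessThan_one by (metis lessThan_empty_iff less_one not_gr0)

definition disc_values ::
  "(nat \<Rightarrow> nat \<Rightarrow> real) \<Rightarrow> nat \<Rightarrow> nat \<Rightarrow> nat \<Rightarrow> (nat \<Rightarrow> nat set) \<Rightarrow> (nat \<Rightarrow> nat set) \<Rightarrow> real set" where
  "disc_values A m n l P Q =
     {disc_sets A m n X Y (P a) (Q b) | a b X Y.
        a < l \<and> b < l \<and> X \<subseteq> P a \<and> X \<noteq> {} \<and> Y \<subseteq> Q b \<and> Y \<noteq> {}}"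

lemma mem_disc_values: "x \<in> disc_values A m n l P Q \<longleftrightarrow>
    (\<exists>a b X Y. x = disc_sets A m n X Y (P a) (Q b) \<and>
      a < l \<and> b < l \<and> X \<subseteq> P a \<and> X \<noteq> {} \<and> Y \<subseteq> Q b \<and> Y \<noteq> {})"
  unfolding disc_values_def mem_Collect_eq ..

lemma disc_part_eq_Max: "disc_part A m n l P Q = Max (disc_values A m n l P Q)"
  unfolding disc_part_def disc_values_def ..

lemma finite_disc_values:
  assumes P: "proper_partition m l P" and Q: "proper_partition n l Q"
  shows "finite (disc_values A m n l P Q)"
proof -
  let ?f = "\<lambda>(a, b, X, Y). disc_sets A m n X Y (P a) (Q b)"
  have "disc_values A m n l P Q \<subseteq> ?f ` ({..<l} \<times> {..<l} \<times> Pow {..<m} \<times> Pow {..<n})"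
  proof
    fix x assume "x \<in> disc_values A m n l P Q"
    then obtain a b X Y where x: "x = disc_sets A m n X Y (P a) (Q b)"
      and ab: "a < l" "b < l" and XY: "X \<subseteq> P a" "Y \<subseteq> Q b"
      unfolding disc_values_def by blast
    have "X \<subseteq> {..<m}" "Y \<subseteq> {..<n}"
      using XY proper_partition_subset[OF P ab(1)] proper_partition_subset[OF Q ab(2)] by auto
    then show "x \<in> ?f ` ({..<l} \<times> {..<l} \<times> Pow {..<m} \<times> Pow {..<n})"
      using x ab by (intro image_eqI[where x = "(a, b, X, Y)"]) auto
  qed
  then show ?thesis
    by (rule finite_subset) auto
qed

lemma disc_values_nonempty:
  assumes "proper_partition m l P" "proper_partition n l Q" "0 < l"
  shows "disc_sets A m n (P 0) (Q 0) (P 0) (Q 0) \<in> disc_values A m n l P Q"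
proof -
  have "P 0 \<noteq> {}" "Q 0 \<noteq> {}"
    using proper_partition_nonempty assms by blast+
  then show ?thesis
    unfolding disc_values_def using \<open>0 < l\<close> by blast
qed

lemma row_vol_nonneg:
  assumes "\<And>i j. i < m \<Longrightarrow> j < n \<Longrightarrow> A i j \<ge> 0" "X \<subseteq> {..<m}"
  shows "0 \<le> row_vol A n X"
  unfolding row_vol_def using assms by (auto intro!: sum_nonneg)

lemma col_vol_nonneg:
  assumes "\<And>i j. i < m \<Longrightarrow> j < n \<Longrightarrow> A i j \<ge> 0" "Y \<subseteq> {..<n}"
  shows "0 \<le> col_vol A m Y"
  unfolding col_vol_def using assms by (auto intro!: sum_nonneg)

lemma row_vol_pos:
  assumes "\<And>i. i < m \<Longrightarrow> (\<Sum>j<n. A i j) > 0" "X \<subseteq> {..<m}" "X \<noteq> {}"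
  shows "0 < row_vol A n X"
  unfolding row_vol_def
  by (rule sum_pos) (use assms finite_subset[OF assms(2)] in auto)

lemma col_vol_pos:
  assumes "\<And>j. j < n \<Longrightarrow> (\<Sum>i<m. A i j) > 0" "Y \<subseteq> {..<n}" "Y \<noteq> {}"
  shows "0 < col_vol A m Y"
  unfolding col_vol_def
  by (rule sum_pos) (use assms finite_subset[OF assms(2)] in auto)

lemma disc_part_nonneg:
  assumes nonneg: "\<And>i j. i < m \<Longrightarrow> j < n \<Longrightarrow> A i j \<ge> 0"
    and P: "proper_partition m l P" and Q: "proper_partition n l Q" and "0 < l"
  shows "0 \<le> disc_part A m n l P Q"
proof -
  have "0 \<le> disc_sets A m n (P 0) (Q 0) (P 0) (Q 0)"
    unfolding disc_sets_def
    using row_vol_nonneg[OF nonneg proper_partition_subset[OF P]]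
      col_vol_nonneg[OF nonneg proper_partition_subset[OF Q]] \<open>0 < l\<close>
    by simp
  also have "\<dots> \<le> disc_part A m n l P Q"
    unfolding disc_part_eq_Max
    using finite_disc_values[OF P Q] disc_values_nonempty[OF P Q \<open>0 < l\<close>] by (rule Max_ge)
  finally show ?thesis .
qed

lemma disc_k_le_disc_part:
  assumes nonneg: "\<And>i j. i < m \<Longrightarrow> j < n \<Longrightarrow> A i j \<ge> 0"
    and P: "proper_partition m l P" and Q: "proper_partition n l Q" and "0 < l"
  shows "disc_k A m n l \<le> disc_part A m n l P Q"
  unfolding disc_k_def
proof (rule cInf_lower)
  show "disc_part A m n l P Q \<in>
      {disc_part A m n l R C |R C. proper_partition m l R \<and> proper_partition n l C}"
    using P Q by blast
  show "bdd_below {disc_part A m n l R C |R C. proper_partition m l R \<and> proper_partition n l C}"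
    using disc_part_nonneg[of m n A, OF nonneg _ _ \<open>0 < l\<close>] by (intro bdd_belowI[of _ 0]) blast
qed

lemma disc_part_one: "disc_part A m n 1 P Q = disc_part A m n 1 (\<lambda>_. P 0) (\<lambda>_. Q 0)"
  unfolding disc_part_def less_one by metis

lemma disc_k_one:
  assumes "0 < m" "0 < n"
  shows "disc_k A m n 1 = disc_part A m n 1 (\<lambda>_. {..<m}) (\<lambda>_. {..<n})"
proof -
  \<comment> \<open>kept opaque: unfolded, d is itself an instance of the left-hand side of const,
    on which the simplifier would then loop\<close>
  define d where "d = disc_part A m n 1 (\<lambda>_. {..<m}) (\<lambda>_. {..<n})"
  have const: "disc_part A m n 1 P Q = d" if "proper_partition m 1 P" "proper_partition n 1 Q" for P Q
    unfolding d_def disc_part_one[of A m n P Q]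
      proper_partition_one_part[OF that(1)] proper_partition_one_part[OF that(2)] ..
  have "{disc_part A m n 1 P Q |P Q. proper_partition m 1 P \<and> proper_partition n 1 Q} = {d}"
  proof (intro equalityI subsetI)
    fix x assume "x \<in> {disc_part A m n 1 P Q |P Q. proper_partition m 1 P \<and> proper_partition n 1 Q}"
    then show "x \<in> {d}"
      by (elim CollectE exE conjE) (simp only: const singleton_iff)
  next
    fix x assume "x \<in> {d}"
    then show "x \<in> {disc_part A m n 1 P Q |P Q. proper_partition m 1 P \<and> proper_partition n 1 Q}"
      using proper_partition_one_trivial[OF assms(1)] proper_partition_one_trivial[OF assms(2)]
      unfolding d_def by blast
  qed
  then have "disc_k A m n 1 = d"
    unfolding disc_k_def by (simp only: cInf_singleton)
  then show ?thesis
    unfolding d_def .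
qed

lemma disc_part_le_disc_part_one:
  assumes P: "proper_partition m l P" and Q: "proper_partition n l Q" and "0 < l"
    and rho_eq: "\<And>a b. a < l \<Longrightarrow> b < l \<Longrightarrow> rho A m n (P a) (Q b) = rho A m n {..<m} {..<n}"
  shows "disc_part A m n l P Q \<le> disc_part A m n 1 (\<lambda>_. {..<m}) (\<lambda>_. {..<n})"
proof -
  note P1 = proper_partition_one_trivial[OF proper_partition_pos[OF P \<open>0 < l\<close>]]
  note Q1 = proper_partition_one_trivial[OF proper_partition_pos[OF Q \<open>0 < l\<close>]]
  have "disc_values A m n l P Q \<subseteq> disc_values A m n 1 (\<lambda>_. {..<m}) (\<lambda>_. {..<n})"
  proof
    fix x assume "x \<in> disc_values A m n l P Q"
    then obtain a b X Y where x: "x = disc_sets A m n X Y (P a) (Q b)"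
      and ab: "a < l" "b < l" and XY: "X \<subseteq> P a" "X \<noteq> {}" "Y \<subseteq> Q b" "Y \<noteq> {}"
      unfolding mem_disc_values by (elim exE conjE) (rule that)
    have "x = disc_sets A m n X Y {..<m} {..<n}"
      unfolding x disc_sets_def using rho_eq[OF ab] by simp
    moreover have "X \<subseteq> {..<m}" "Y \<subseteq> {..<n}"
      using XY proper_partition_subset[OF P ab(1)] proper_partition_subset[OF Q ab(2)] by auto
    ultimately show "x \<in> disc_values A m n 1 (\<lambda>_. {..<m}) (\<lambda>_. {..<n})"
      using XY unfolding mem_disc_values by blast
  qed
  then show ?thesis
    unfolding disc_part_eq_Max
    using disc_values_nonempty[OF P Q \<open>0 < l\<close>] finite_disc_values[OF P1 Q1]
    by (intro Max_mono) auto
qed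

lemma amass_UN_left:
  assumes "proper_partition m k R" "I \<subseteq> {..<k}"
  shows "amass A (\<Union>a\<in>I. R a) Y = (\<Sum>a\<in>I. amass A (R a) Y)"
proof -
  have "finite I" using finite_subset[OF assms(2)] by simp
  moreover have "\<forall>a\<in>I. finite (R a)" using assms proper_partition_finite by blast
  moreover have "\<forall>a\<in>I. \<forall>a'\<in>I. a \<noteq> a' \<longrightarrow> R a \<inter> R a' = {}"
    using assms unfolding proper_partition_def by blast
  ultimately show ?thesis
    unfolding amass_def by (rule sum.UNION_disjoint)
qed

lemma amass_UN_right:
  assumes "proper_partition n k C" "J \<subseteq> {..<k}"
  shows "amass A X (\<Union>b\<in>J. C b) = (\<Sum>b\<in>J. amass A X (C b))"
proof -
  have swap: "amass A X Y = (\<Sum>j\<in>Y. \<Sum>i\<in>X. A i j)" for Y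
    unfolding amass_def by (rule sum.swap)
  have "finite J" using finite_subset[OF assms(2)] by simp
  moreover have "\<forall>b\<in>J. finite (C b)" using assms proper_partition_finite by blast
  moreover have "\<forall>b\<in>J. \<forall>b'\<in>J. b \<noteq> b' \<longrightarrow> C b \<inter> C b' = {}"
    using assms unfolding proper_partition_def by blast
  ultimately show ?thesis
    unfolding swap by (rule sum.UNION_disjoint)
qed

lemma row_vol_eq_amass: "row_vol A n X = amass A X {..<n}"
  unfolding row_vol_def amass_def ..

lemma col_vol_eq_amass: "col_vol A m Y = amass A {..<m} Y"
  unfolding col_vol_def amass_def by (rule sum.swap)

lemma row_vol_UN: "proper_partition m k R \<Longrightarrow> I \<subseteq> {..<k} \<Longrightarrow>
    row_vol A n (\<Union>a\<in>I. R a) = (\<Sum>a\<in>I. row_vol A n (R a))"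
  unfolding row_vol_eq_amass by (rule amass_UN_left)

lemma col_vol_UN: "proper_partition n k C \<Longrightarrow> J \<subseteq> {..<k} \<Longrightarrow>
    col_vol A m (\<Union>b\<in>J. C b) = (\<Sum>b\<in>J. col_vol A m (C b))"
  unfolding col_vol_eq_amass by (rule amass_UN_right)

lemma amass_UN_eq_vol_product:
  assumes R: "proper_partition m k R" and C: "proper_partition n k C"
    and indep: "\<And>a b. a < k \<Longrightarrow> b < k \<Longrightarrow>
       amass A (R a) (C b) =
         (\<Sum>b'<k. amass A (R a) (C b')) * (\<Sum>a'<k. amass A (R a') (C b))"
    and I: "I \<subseteq> {..<k}" and J: "J \<subseteq> {..<k}"
  shows "amass A (\<Union>a\<in>I. R a) (\<Union>b\<in>J. C b) =
    row_vol A n (\<Union>a\<in>I. R a) * col_vol A m (\<Union>b\<in>J. C b)"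
proof -
  have block: "amass A (R a) (C b) = row_vol A n (R a) * col_vol A m (C b)"
    if "a < k" "b < k" for a b
  proof -
    have "row_vol A n (R a) = (\<Sum>b'<k. amass A (R a) (C b'))"
      unfolding row_vol_eq_amass proper_partition_UN[OF C, symmetric]
      by (rule amass_UN_right[OF C]) simp
    moreover have "col_vol A m (C b) = (\<Sum>a'<k. amass A (R a') (C b))"
      unfolding col_vol_eq_amass proper_partition_UN[OF R, symmetric]
      by (rule amass_UN_left[OF R]) simp
    ultimately show ?thesis
      using indep[OF that] by simp
  qed
  have "amass A (\<Union>a\<in>I. R a) (\<Union>b\<in>J. C b) = (\<Sum>a\<in>I. \<Sum>b\<in>J. amass A (R a) (C b))"
    unfolding amass_UN_left[OF R I] amass_UN_right[OF C J] by (rule sum.swap)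
  also have "\<dots> = (\<Sum>a\<in>I. \<Sum>b\<in>J. row_vol A n (R a) * col_vol A m (C b))"
    using I J block by (intro sum.cong) auto
  also have "\<dots> = row_vol A n (\<Union>a\<in>I. R a) * col_vol A m (\<Union>b\<in>J. C b)"
    unfolding row_vol_UN[OF R I] col_vol_UN[OF C J] sum_product ..
  finally show ?thesis .
qed

lemma rho_UN_eq_one:
  assumes R: "proper_partition m k R" and C: "proper_partition n k C"
    and rowpos: "\<And>i. i < m \<Longrightarrow> (\<Sum>j<n. A i j) > 0"
    and colpos: "\<And>j. j < n \<Longrightarrow> (\<Sum>i<m. A i j) > 0"
    and indep: "\<And>a b. a < k \<Longrightarrow> b < k \<Longrightarrow>
       amass A (R a) (C b) =
         (\<Sum>b'<k. amass A (R a) (C b')) * (\<Sum>a'<k. amass A (R a') (C b))"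
    and I: "I \<subseteq> {..<k}" "I \<noteq> {}" and J: "J \<subseteq> {..<k}" "J \<noteq> {}"
  shows "rho A m n (\<Union>a\<in>I. R a) (\<Union>b\<in>J. C b) = 1"
proof -
  have "0 < row_vol A n (\<Union>a\<in>I. R a)"
    using rowpos proper_partition_UN_subset[OF R I(1)] proper_partition_UN_nonempty[OF R I]
    by (rule row_vol_pos)
  moreover have "0 < col_vol A m (\<Union>b\<in>J. C b)"
    using colpos proper_partition_UN_subset[OF C J(1)] proper_partition_UN_nonempty[OF C J]
    by (rule col_vol_pos)
  moreover note amass_UN_eq_vol_product[OF R C indep I(1) J(1)]
  ultimately show ?thesis
    unfolding rho_def by simp
qed

definition coarsen :: "nat \<Rightarrow> (nat \<Rightarrow> nat) \<Rightarrow> (nat \<Rightarrow> nat set) \<Rightarrow> nat \<Rightarrow> nat set" where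
  "coarsen k g P a = (\<Union>c\<in>{c. c < k \<and> g c = a}. P c)"

lemma fiber_subset: "{c. c < k \<and> g c = a} \<subseteq> {..<k}"
  by auto

lemma fiber_nonempty:
  assumes "g ` {..<k} = {..<l}" "a < l"
  shows "{c. c < k \<and> g c = a} \<noteq> {}"
proof -
  have "a \<in> g ` {..<k}" using assms by simp
  then obtain c where "c < k" "g c = a" by blast
  then show ?thesis by blast
qed

lemma proper_partition_coarsen:
  assumes P: "proper_partition N k P" and g: "g ` {..<k} = {..<l}"
  shows "proper_partition N l (coarsen k g P)"
proof -
  have "coarsen k g P a \<noteq> {}" if "a < l" for a
    unfolding coarsen_def using P fiber_subset fiber_nonempty[OF g that]
    by (rule proper_partition_UN_nonempty)
  moreover have "coarsen k g P a \<inter> coarsen k g P b = {}" if "a \<noteq> b" for a b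
  proof -
    have "P c \<inter> P c' = {}" if "c < k" "g c = a" "c' < k" "g c' = b" for c c'
      using that \<open>a \<noteq> b\<close> by (intro proper_partition_disjoint[OF P]) auto
    then show ?thesis
      unfolding coarsen_def by blast
  qed
  moreover have "(\<Union>a<l. coarsen k g P a) = {..<N}"
    unfolding proper_partition_UN[OF P, symmetric]
  proof
    show "(\<Union>a<l. coarsen k g P a) \<subseteq> (\<Union>c<k. P c)"
      unfolding coarsen_def by blast
    show "(\<Union>c<k. P c) \<subseteq> (\<Union>a<l. coarsen k g P a)"
    proof
      fix x assume "x \<in> (\<Union>c<k. P c)"
      then obtain c where c: "c < k" "x \<in> P c" by blast
      then have "g c < l" using g by blast
      with c show "x \<in> (\<Union>a<l. coarsen k g P a)"
        unfolding coarsen_def by blast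
    qed
  qed
  ultimately show ?thesis
    unfolding proper_partition_def by blast
qed

lemma image_min_lessThan:
  fixes k l :: nat
  assumes "0 < l" "l \<le> k"
  shows "(\<lambda>c. min c (l - 1)) ` {..<k} = {..<l}"
proof
  show "(\<lambda>c. min c (l - 1)) ` {..<k} \<subseteq> {..<l}"
    using assms by auto
  show "{..<l} \<subseteq> (\<lambda>c. min c (l - 1)) ` {..<k}"
  proof
    fix a assume "a \<in> {..<l}"
    then show "a \<in> (\<lambda>c. min c (l - 1)) ` {..<k}"
      using assms by (intro image_eqI[where x = a]) auto
  qed
qed

theorem mainTheorem4:
  fixes A :: "nat \<Rightarrow> nat \<Rightarrow> real" and m n k :: nat
    and R C :: "nat \<Rightarrow> nat set"
  assumes nonneg: "\<And>i j. i < m \<Longrightarrow> j < n \<Longrightarrow> A i j \<ge> 0"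
    and total: "(\<Sum>i<m. \<Sum>j<n. A i j) = 1"
    and nondec: "non_decomposable A m n"
    and rowpos: "\<And>i. i < m \<Longrightarrow> (\<Sum>j<n. A i j) > 0"
    and colpos: "\<And>j. j < n \<Longrightarrow> (\<Sum>i<m. A i j) > 0"
    and partR: "proper_partition m k R"
    and partC: "proper_partition n k C"
    and indep: "\<And>a b. a < k \<Longrightarrow> b < k \<Longrightarrow>
       amass A (R a) (C b) =
         (\<Sum>b'<k. amass A (R a) (C b')) * (\<Sum>a'<k. amass A (R a') (C b))"
  shows "\<forall>l. 2 \<le> l \<and> l \<le> k \<longrightarrow> disc_k A m n l \<le> disc_k A m n 1"
proof (intro allI impI)
  fix l assume l: "2 \<le> l \<and> l \<le> k"
  then have "0 < l" "0 < k" by auto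
  define g where "g c = min c (l - 1)" for c
  have g: "g ` {..<k} = {..<l}"
    unfolding g_def using l by (intro image_min_lessThan) auto
  have rho_one: "rho A m n (\<Union>a\<in>I. R a) (\<Union>b\<in>J. C b) = 1"
    if "I \<subseteq> {..<k}" "I \<noteq> {}" "J \<subseteq> {..<k}" "J \<noteq> {}" for I J
    by (rule rho_UN_eq_one[OF partR partC]) (fact rowpos colpos indep that)+
  note R' = proper_partition_coarsen[OF partR g] and C' = proper_partition_coarsen[OF partC g]
  have "rho A m n {..<m} {..<n} = 1"
    using rho_one[of "{..<k}" "{..<k}"] \<open>0 < k\<close>
    unfolding proper_partition_UN[OF partR] proper_partition_UN[OF partC] lessThan_empty_iff by simp
  moreover have "rho A m n (coarsen k g R a) (coarsen k g C b) = 1" if "a < l" "b < l" for a b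
    unfolding coarsen_def
    by (rule rho_one[OF fiber_subset fiber_nonempty[OF g that(1)] fiber_subset fiber_nonempty[OF g that(2)]])
  ultimately have "disc_part A m n l (coarsen k g R) (coarsen k g C)
      \<le> disc_part A m n 1 (\<lambda>_. {..<m}) (\<lambda>_. {..<n})"
    by (intro disc_part_le_disc_part_one[OF R' C' \<open>0 < l\<close>]) simp
  also have "\<dots> = disc_k A m n 1"
    using disc_k_one[OF proper_partition_pos[OF partR \<open>0 < k\<close>] proper_partition_pos[OF partC \<open>0 < k\<close>]] ..
  finally show "disc_k A m n l \<le> disc_k A m n 1"
    using disc_k_le_disc_part[of m n A, OF nonneg R' C' \<open>0 < l\<close>] by linarith
qed

end
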